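(* Let $H:\mathscr{A}(\mathbb{R})\to\mathscr{A}(\mathbb{R})$ be the Hardy operator $Hf(x)=\frac1x\int_0^xf(y)\,dy$, and let $A=\sum_{k=0}^K a_kH^k$ with $a_0,a_1,\dots,a_K\in\mathbb{C}$. Then $A$ generates a $C_0$-group on $\mathscr{A}(\mathbb{R})$.
   Context: $\mathscr{A}(\mathbb{R})$ denotes the space of real analytic functions on $\mathbb{R}$ with the inductive limit topology $\operatorname{ind}_{U\supset\mathbb{R}}H(U)$ ($U$ complex open neighbourhoods of $\mathbb{R}$, $H(U)$ with compact-open topology). $H^0$ is the identity. A $C_0$-group is a family $(T_t)_{t\in\mathbb{R}}$ of continuous linear operators on $\mathscr{A}(\mathbb{R})$ with $T_tT_s=T_{t+s}$ for all $t,s\in\mathbb{R}$, $T_0=I$, and $t\mapsto T_tf$ continuous on $\mathbb{R}$ for each $f$; its generator is $Af=\lim_{t\to0}(T_tf-f)/t$ on the domain where the limit exists; "$A$ generates" means $A$ (with domain $\mathscr{A}(\mathbb{R})$) is the generator. *)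

theory Defs
  imports "HOL-Analysis.Analysis"
begin

definition real_analytic_fns :: "(real \<Rightarrow> complex) set" where
  "real_analytic_fns = {f. \<exists>U g. open U \<and> (\<forall>x::real. complex_of_real x \<in> U) \<and>
      g holomorphic_on U \<and> (\<forall>x. f x = g (complex_of_real x))}"

text \<open>Continuous seminorms of the locally convex inductive limit topology ind_U H(U):
  seminorms on A(R) whose restriction to every H(U) (compact-open topology) is continuous,
  i.e. dominated by C times the sup-norm over some compact K contained in U.\<close>
definition ind_seminorm :: "((real \<Rightarrow> complex) \<Rightarrow> real) \<Rightarrow> bool" where
  "ind_seminorm p \<longleftrightarrow>
     (\<forall>f\<in>real_analytic_fns. 0 \<le> p f) \<and>
     (\<forall>f\<in>real_analytic_fns. \<forall>g\<in>real_analytic_fns. p (\<lambda>x. f x + g x) \<le> p f + p g) \<and>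
     (\<forall>c. \<forall>f\<in>real_analytic_fns. p (\<lambda>x. c * f x) = cmod c * p f) \<and>
     (\<forall>U. open U \<and> (\<forall>x::real. complex_of_real x \<in> U) \<longrightarrow>
        (\<exists>K C. compact K \<and> K \<subseteq> U \<and>
           (\<forall>g M. g holomorphic_on U \<and> (\<forall>z\<in>K. cmod (g z) \<le> M) \<longrightarrow>
              p (\<lambda>x. g (complex_of_real x)) \<le> C * M)))"

definition tendsto_A :: "('a \<Rightarrow> real \<Rightarrow> complex) \<Rightarrow> (real \<Rightarrow> complex) \<Rightarrow> 'a filter \<Rightarrow> bool" where
  "tendsto_A F L net \<longleftrightarrow>
     (\<forall>q. ind_seminorm q \<longrightarrow> ((\<lambda>t. q (\<lambda>x. F t x - L x)) \<longlongrightarrow> 0) net)"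

definition cont_lin_op :: "((real \<Rightarrow> complex) \<Rightarrow> (real \<Rightarrow> complex)) \<Rightarrow> bool" where
  "cont_lin_op T \<longleftrightarrow>
     (\<forall>f\<in>real_analytic_fns. T f \<in> real_analytic_fns) \<and>
     (\<forall>f\<in>real_analytic_fns. \<forall>g\<in>real_analytic_fns. T (\<lambda>x. f x + g x) = (\<lambda>x. T f x + T g x)) \<and>
     (\<forall>c. \<forall>f\<in>real_analytic_fns. T (\<lambda>x. c * f x) = (\<lambda>x. c * T f x)) \<and>
     (\<forall>q. ind_seminorm q \<longrightarrow>
        (\<exists>p C. ind_seminorm p \<and> (\<forall>f\<in>real_analytic_fns. q (T f) \<le> C * p f)))"

definition C0_group :: "(real \<Rightarrow> (real \<Rightarrow> complex) \<Rightarrow> (real \<Rightarrow> complex)) \<Rightarrow> bool" where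
  "C0_group T \<longleftrightarrow>
     (\<forall>t. cont_lin_op (T t)) \<and>
     (\<forall>t s. \<forall>f\<in>real_analytic_fns. T t (T s f) = T (t + s) f) \<and>
     (\<forall>f\<in>real_analytic_fns. T 0 f = f) \<and>
     (\<forall>f\<in>real_analytic_fns. \<forall>t0. tendsto_A (\<lambda>t. T t f) (T t0 f) (at t0))"

text \<open>A (with domain all of A(R)) is the generator of T: the generator's domain consists of
  those f in A(R) for which the difference quotient converges in A(R); we require that this
  holds for every f in A(R) with limit A f (limits are unique, the topology being Hausdorff).\<close>
definition generates :: "((real \<Rightarrow> complex) \<Rightarrow> (real \<Rightarrow> complex)) \<Rightarrow>
    (real \<Rightarrow> (real \<Rightarrow> complex) \<Rightarrow> (real \<Rightarrow> complex)) \<Rightarrow> bool" where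
  "generates A T \<longleftrightarrow>
     (\<forall>f\<in>real_analytic_fns. A f \<in> real_analytic_fns \<and>
        tendsto_A (\<lambda>t x. (T t f x - f x) / complex_of_real t) (A f) (at 0))"

definition hardy :: "(real \<Rightarrow> complex) \<Rightarrow> (real \<Rightarrow> complex)" where
  "hardy f x = (if x = 0 then f 0
     else if 0 < x then integral {0..x} f / complex_of_real x
     else - integral {x..0} f / complex_of_real x)"

definition hardy_poly :: "nat \<Rightarrow> (nat \<Rightarrow> complex) \<Rightarrow> (real \<Rightarrow> complex) \<Rightarrow> (real \<Rightarrow> complex)" where
  "hardy_poly K a f = (\<lambda>x. \<Sum>k\<le>K. a k * (hardy ^^ k) f x)"

end

theory Submission
  imports Defs "HOL-Complex_Analysis.Complex_Analysis"
begin

text \<open>Every open neighbourhood of the real line contains one, \<open>V\<close>, that is star-shaped with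
  respect to \<open>0\<close>. There the Hardy operator extends to the complex Hardy operator
  \<open>(H g)(z) = (1/z) \<integral> g\<close> along the segment \<open>[0, z]\<close>, which preserves holomorphy on \<open>V\<close> and
  satisfies \<open>sup |H g| \<le> sup |g|\<close> over every star-shaped \<open>S \<subseteq> V\<close>. Hence \<open>A\<close> is bounded by
  \<open>c = \<Sum>k\<le>K. |a k|\<close> in all these sup-norms at once, and \<open>T t = \<Sum>n. t^n A^n / n!\<close> converges
  uniformly on compact star-shaped sets with \<open>sup |T t g| \<le> exp (|t| c) sup |g|\<close>. The group
  law is a rearrangement of an absolutely convergent double series, and the tail estimates
  \<open>|T t g - g| \<le> |t| c exp (|t| c) M\<close> and \<open>|(T t g - g)/t - A g| \<le> |t| c\<^sup>2 exp (|t| c) M\<close> give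
  strong continuity and identify the generator, because every continuous seminorm on \<open>\<A>(\<real>)\<close>
  is dominated by a sup-norm over a compact set, which can be enlarged to a star-shaped one.\<close>

section \<open>Star-shaped neighbourhoods of the real line\<close>

definition star_shaped_0 :: "complex set \<Rightarrow> bool" where
  "star_shaped_0 S \<longleftrightarrow> (\<forall>z\<in>S. closed_segment 0 z \<subseteq> S)"

definition real_star_nbhd :: "complex set \<Rightarrow> bool" where
  "real_star_nbhd V \<longleftrightarrow> open V \<and> star_shaped_0 V \<and> (\<forall>x::real. complex_of_real x \<in> V)"

lemma star_shaped_0D: "star_shaped_0 S \<Longrightarrow> z \<in> S \<Longrightarrow> closed_segment 0 z \<subseteq> S"
  unfolding star_shaped_0_def by auto

lemma star_shaped_0_iff_scale:
  "star_shaped_0 S \<longleftrightarrow> (\<forall>z\<in>S. \<forall>u::real. 0 \<le> u \<longrightarrow> u \<le> 1 \<longrightarrow> complex_of_real u * z \<in> S)"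
proof
  assume S: "star_shaped_0 S"
  show "\<forall>z\<in>S. \<forall>u::real. 0 \<le> u \<longrightarrow> u \<le> 1 \<longrightarrow> complex_of_real u * z \<in> S"
  proof (intro ballI allI impI)
    fix z u assume "z \<in> S" "0 \<le> u" "u \<le> (1::real)"
    then have "complex_of_real u * z \<in> closed_segment 0 z"
      by (auto simp: in_segment scaleR_conv_of_real)
    then show "complex_of_real u * z \<in> S" using S \<open>z \<in> S\<close> star_shaped_0D by blast
  qed
qed (auto simp: star_shaped_0_def in_segment scaleR_conv_of_real)

lemma
  assumes "real_star_nbhd V"
  shows real_star_nbhd_open: "open V"
    and real_star_nbhd_star_shaped: "star_shaped_0 V"
    and real_star_nbhd_real: "complex_of_real x \<in> V"
  using assms unfolding real_star_nbhd_def by auto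

lemma real_star_nbhd_0: "real_star_nbhd V \<Longrightarrow> 0 \<in> V"
  using real_star_nbhd_real[of V 0] by simp

lemma real_star_nbhd_Int: "real_star_nbhd V \<Longrightarrow> real_star_nbhd W \<Longrightarrow> real_star_nbhd (V \<inter> W)"
  unfolding real_star_nbhd_def star_shaped_0_def by auto

lemma compact_star_shaped_0_superset:
  assumes "compact K" "K \<subseteq> V" "star_shaped_0 V"
  obtains S where "compact S" "K \<subseteq> S" "S \<subseteq> V" "star_shaped_0 S"
proof -
  define S where "S = (\<lambda>p. complex_of_real (fst p) * snd p) ` ({0..1} \<times> K)"
  have "compact S"
    unfolding S_def by (intro compact_continuous_image continuous_intros compact_Times assms) auto
  moreover have "K \<subseteq> S"
    unfolding S_def by (force intro: image_eqI[where x = "(1, _)"])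
  moreover have "S \<subseteq> V"
    using assms(2,3) unfolding S_def star_shaped_0_iff_scale by auto
  moreover have "star_shaped_0 S"
    unfolding star_shaped_0_iff_scale
  proof (intro ballI allI impI)
    fix z u assume "z \<in> S" "0 \<le> u" "u \<le> (1::real)"
    then obtain v w where "v \<in> {0..1}" "w \<in> K" "z = complex_of_real v * w" unfolding S_def by auto
    then show "complex_of_real u * z \<in> S"
      unfolding S_def using \<open>0 \<le> u\<close> \<open>u \<le> 1\<close>
      by (intro image_eqI[of _ _ "(u * v, w)"]) (auto simp: mult_le_one mult.assoc)
  qed
  ultimately show ?thesis using that by blast
qed

lemma real_line_uniform_balls:
  assumes "open U" "\<And>x::real. complex_of_real x \<in> U"
  obtains e where "\<And>n. e n > 0" "\<And>n x. \<bar>x\<bar> \<le> real n \<Longrightarrow> ball (complex_of_real x) (e n) \<subseteq> U"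
proof -
  have "\<exists>e>0. \<forall>x::real. \<bar>x\<bar> \<le> real n \<longrightarrow> ball (complex_of_real x) e \<subseteq> U" for n :: nat
  proof -
    have "compact (complex_of_real ` {- real n..real n})"
      by (intro compact_continuous_image continuous_intros) auto
    moreover have "complex_of_real ` {- real n..real n} \<subseteq> U" using assms(2) by auto
    ultimately obtain e where "e > 0" "(\<Union>x\<in>complex_of_real ` {- real n..real n}. ball x e) \<subseteq> U"
      using compact_subset_open_imp_ball_epsilon_subset assms(1) by metis
    moreover have "x \<in> {- real n..real n}" if "\<bar>x\<bar> \<le> real n" for x using that by auto
    ultimately show ?thesis by blast
  qed
  then show ?thesis using that by metis
qed

lemma real_star_nbhd_subset:
  assumes "open U" "\<And>x::real. complex_of_real x \<in> U"
  obtains V where "real_star_nbhd V" "V \<subseteq> U"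
proof -
  obtain e where e: "\<And>n. e n > 0"
    and e_ball: "\<And>n x. \<bar>x\<bar> \<le> real n \<Longrightarrow> ball (complex_of_real x) (e n) \<subseteq> U"
    using real_line_uniform_balls[OF assms] by blast
  define V where "V = (\<Union>n. {z. \<bar>Re z\<bar> < real n \<and> \<bar>Im z\<bar> < e n})"
  have "open V"
    unfolding V_def by (intro open_UN ballI open_Collect_conj open_Collect_less continuous_intros)
  moreover have "star_shaped_0 V"
    unfolding star_shaped_0_iff_scale
  proof (intro ballI allI impI)
    fix z u assume "z \<in> V" "0 \<le> u" "u \<le> (1::real)"
    then obtain n where n: "\<bar>Re z\<bar> < real n" "\<bar>Im z\<bar> < e n" unfolding V_def by auto
    have "\<bar>u * Re z\<bar> \<le> \<bar>Re z\<bar>" "\<bar>u * Im z\<bar> \<le> \<bar>Im z\<bar>"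
      using \<open>0 \<le> u\<close> \<open>u \<le> 1\<close> by (auto simp: abs_mult mult_left_le_one_le)
    then have "\<bar>Re (complex_of_real u * z)\<bar> < real n \<and> \<bar>Im (complex_of_real u * z)\<bar> < e n"
      using n by auto
    then show "complex_of_real u * z \<in> V" unfolding V_def by blast
  qed
  moreover have "complex_of_real x \<in> V" for x
  proof -
    obtain n :: nat where "\<bar>x\<bar> < real n" using reals_Archimedean2 by blast
    then show ?thesis unfolding V_def using e[of n] by auto
  qed
  moreover have "V \<subseteq> U"
  proof
    fix z assume "z \<in> V"
    then obtain n where n: "\<bar>Re z\<bar> < real n" "\<bar>Im z\<bar> < e n" unfolding V_def by auto
    have "dist (complex_of_real (Re z)) z = \<bar>Im z\<bar>"
      by (simp add: dist_norm cmod_def complex_of_real_def)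
    then show "z \<in> U" using e_ball[of "Re z" n] n by auto
  qed
  ultimately show ?thesis using that unfolding real_star_nbhd_def by blast
qed

lemma real_analytic_fnsE:
  assumes "f \<in> real_analytic_fns"
  obtains V g where "real_star_nbhd V" "g holomorphic_on V" "f = (\<lambda>x. g (complex_of_real x))"
proof -
  obtain U g where U: "open U" "\<forall>x::real. complex_of_real x \<in> U"
    and g: "g holomorphic_on U" "\<forall>x. f x = g (complex_of_real x)"
    using assms unfolding real_analytic_fns_def by blast
  obtain V where V: "real_star_nbhd V" "V \<subseteq> U" using real_star_nbhd_subset U by metis
  show ?thesis
  proof (rule that[OF V(1)])
    show "g holomorphic_on V" using g(1) V(2) by (rule holomorphic_on_subset)
    show "f = (\<lambda>x. g (complex_of_real x))" using g(2) by auto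
  qed
qed

lemma real_analytic_fnsI:
  "open U \<Longrightarrow> (\<And>x::real. complex_of_real x \<in> U) \<Longrightarrow> g holomorphic_on U \<Longrightarrow>
   (\<lambda>x. g (complex_of_real x)) \<in> real_analytic_fns"
  unfolding real_analytic_fns_def by blast

section \<open>The complex Hardy operator\<close>

definition hardy_c :: "(complex \<Rightarrow> complex) \<Rightarrow> complex \<Rightarrow> complex" where
  "hardy_c g z = (if z = 0 then g 0 else contour_integral (linepath 0 z) g / z)"

lemma hardy_c_cong:
  assumes "\<And>w. w \<in> closed_segment 0 z \<Longrightarrow> F w = G w"
  shows "hardy_c F z = hardy_c G z"
proof -
  have "contour_integral (linepath 0 z) F = contour_integral (linepath 0 z) G"
    using assms by (intro contour_integral_eq) auto
  then show ?thesis using assms[of 0] by (simp add: hardy_c_def)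
qed

lemma hardy_c_norm_le:
  assumes "continuous_on (closed_segment 0 z) g" "\<And>w. w \<in> closed_segment 0 z \<Longrightarrow> cmod (g w) \<le> M"
  shows "cmod (hardy_c g z) \<le> M"
proof (cases "z = 0")
  case True then show ?thesis using assms(2)[of 0] by (simp add: hardy_c_def)
next
  case False
  have "0 \<le> M" using assms(2)[of 0] by (meson ends_in_segment(1) norm_ge_zero order_trans)
  have "g contour_integrable_on linepath 0 z"
    by (rule contour_integrable_continuous_linepath[OF assms(1)])
  then have "cmod (contour_integral (linepath 0 z) g) \<le> M * cmod (z - 0)"
    using assms(2) \<open>0 \<le> M\<close>
    by (intro has_contour_integral_bound_linepath[OF has_contour_integral_integral]) auto
  then show ?thesis using False by (simp add: hardy_c_def norm_divide divide_le_eq)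
qed

lemma hardy_c_cmult: "hardy_c (\<lambda>w. b * g w) = (\<lambda>z. b * hardy_c g z)"
  by (auto simp: hardy_c_def contour_integral_integral mult.assoc fun_eq_iff)

lemma hardy_c_add:
  assumes "continuous_on (closed_segment 0 z) g1" "continuous_on (closed_segment 0 z) g2"
  shows "hardy_c (\<lambda>w. g1 w + g2 w) z = hardy_c g1 z + hardy_c g2 z"
  using contour_integrable_continuous_linepath[OF assms(1)]
    contour_integrable_continuous_linepath[OF assms(2)]
  by (simp add: hardy_c_def contour_integral_add add_divide_distrib)

lemma hardy_c_suminf:
  assumes cont: "\<And>m. continuous_on (closed_segment 0 z) (h m)"
    and bound: "\<And>m w. w \<in> closed_segment 0 z \<Longrightarrow> cmod (h m w) \<le> B m" "summable B"
  shows "hardy_c (\<lambda>w. \<Sum>m. h m w) z = (\<Sum>m. hardy_c (h m) z)"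
proof (cases "z = 0")
  case True then show ?thesis by (simp add: hardy_c_def)
next
  case False
  have "uniform_limit (closed_segment 0 z) (\<lambda>N w. \<Sum>m<N. h m w) (\<lambda>w. \<Sum>m. h m w) sequentially"
    by (rule Weierstrass_m_test[OF bound])
  then obtain J where J: "((\<lambda>w. \<Sum>m. h m w) has_contour_integral J) (linepath 0 z)"
    "(\<lambda>m. contour_integral (linepath 0 z) (h m)) sums J"
    by (rule contour_integral_sums_linepath[OF _ cont])
  have "(\<lambda>m. hardy_c (h m) z) sums (J / z)"
    using sums_divide[OF J(2), of z] False by (simp add: hardy_c_def)
  then show ?thesis using False J(1) by (simp add: hardy_c_def contour_integral_unique sums_iff)
qed

lemma contour_integral_linepath_0_has_field_derivative:
  assumes V: "open V" "star_shaped_0 V" "0 \<in> V" and hol: "g holomorphic_on V" and x: "x \<in> V"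
  shows "((\<lambda>z. contour_integral (linepath 0 z) g) has_field_derivative g x) (at x)"
proof -
  have contf: "continuous_on V g" using hol by (rule holomorphic_on_imp_continuous_on)
  have segs: "\<And>y. y \<in> V \<Longrightarrow> closed_segment 0 y \<subseteq> V" using V(2) by (simp add: star_shaped_0D)
  have triangle: "contour_integral (linepath 0 b) g + contour_integral (linepath b c) g +
        contour_integral (linepath c 0) g = 0" if bc: "closed_segment b c \<subseteq> V" for b c
  proof -
    have hull: "convex hull {0, b, c} \<subseteq> V"
      by (simp add: V(3) segs bc starlike_convex_subset)
    have "g field_differentiable at w" if "w \<in> interior (convex hull {0, b, c}) - {}" for w
      using that hull interior_subset hol V(1) holomorphic_on_imp_differentiable_at by blast
    then have "(g has_contour_integral 0) (linepath 0 b +++ linepath b c +++ linepath c 0)"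
      using continuous_on_subset[OF contf hull]
      by (intro Cauchy_theorem_triangle_cofinite[where S = "{}"]) auto
    then show ?thesis by (rule has_chain_integral_chain_integral3)
  qed
  show ?thesis
    by (rule triangle_contour_integrals_starlike_primitive[OF contf V(3) V(1) x segs triangle])
qed

lemma holomorphic_on_hardy_c:
  assumes V: "open V" "star_shaped_0 V" "0 \<in> V" and hol: "g holomorphic_on V"
  shows "hardy_c g holomorphic_on V"
proof -
  define G where "G z = contour_integral (linepath 0 z) g" for z
  have G': "\<And>x. x \<in> V \<Longrightarrow> (G has_field_derivative g x) (at x)"
    unfolding G_def using contour_integral_linepath_0_has_field_derivative[OF V hol] by blast
  then have "G holomorphic_on V" using V(1) holomorphic_on_open by blast
  \<comment> \<open>\<open>hardy_c g\<close> is the difference quotient of the primitive \<open>G\<close> at \<open>0\<close>\<close>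
  then have "(\<lambda>z. if z = 0 then deriv G 0 else (G z - G 0) / (z - 0)) holomorphic_on V"
    by (rule pole_lemma) (simp add: V interior_open)
  moreover have "deriv G 0 = g 0" using G'[OF V(3)] by (rule DERIV_imp_deriv)
  then have "(\<lambda>z. if z = 0 then deriv G 0 else (G z - G 0) / (z - 0)) = hardy_c g"
    by (simp add: fun_eq_iff G_def hardy_c_def)
  ultimately show ?thesis by simp
qed

lemma hardy_eq_hardy_c:
  assumes "continuous_on (closed_segment 0 (complex_of_real x)) g"
  shows "hardy (\<lambda>x. g (complex_of_real x)) x = hardy_c g (complex_of_real x)"
proof -
  consider "x = 0" | "0 < x" | "x < 0" by linarith
  then show ?thesis
  proof cases
    case 1 then show ?thesis by (simp add: hardy_def hardy_c_def)
  next
    case 2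
    have "contour_integral (linepath 0 (complex_of_real x)) g =
          integral {Re 0..Re (complex_of_real x)} (\<lambda>x. g (complex_of_real x))"
      by (rule contour_integral_linepath_Reals_eq) (use 2 in auto)
    then show ?thesis using 2 by (simp add: hardy_def hardy_c_def)
  next
    case 3
    have "contour_integral (linepath 0 (complex_of_real x)) g =
          - contour_integral (linepath (complex_of_real x) 0) g"
      by (rule contour_integral_reverse_linepath[OF assms])
    also have "contour_integral (linepath (complex_of_real x) 0) g =
               integral {Re (complex_of_real x)..Re 0} (\<lambda>x. g (complex_of_real x))"
      by (rule contour_integral_linepath_Reals_eq) (use 3 in auto)
    finally show ?thesis using 3 by (simp add: hardy_def hardy_c_def del: linepath_0)
  qed
qed

section \<open>Operators bounded on star-shaped sets\<close>

text \<open>The properties of the complex Hardy operator that are stable under composition and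
  linear combination; \<open>c\<close> bounds the operator in the sup-norms over all star-shaped subsets of
  all star-shaped neighbourhoods of \<open>\<real>\<close> simultaneously.\<close>

definition star_bounded_op :: "real \<Rightarrow> ((complex \<Rightarrow> complex) \<Rightarrow> complex \<Rightarrow> complex) \<Rightarrow> bool" where
  "star_bounded_op c L \<longleftrightarrow> 0 \<le> c \<and>
     (\<forall>V g. real_star_nbhd V \<longrightarrow> g holomorphic_on V \<longrightarrow> L g holomorphic_on V) \<and>
     (\<forall>S F G. star_shaped_0 S \<longrightarrow> (\<forall>w\<in>S. F w = G w) \<longrightarrow> (\<forall>z\<in>S. L F z = L G z)) \<and>
     (\<forall>b g. L (\<lambda>w. b * g w) = (\<lambda>z. b * L g z)) \<and>
     (\<forall>V g1 g2. real_star_nbhd V \<longrightarrow> g1 holomorphic_on V \<longrightarrow> g2 holomorphic_on V \<longrightarrow>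
        (\<forall>z\<in>V. L (\<lambda>w. g1 w + g2 w) z = L g1 z + L g2 z)) \<and>
     (\<forall>V g S M. real_star_nbhd V \<longrightarrow> g holomorphic_on V \<longrightarrow> star_shaped_0 S \<longrightarrow> S \<subseteq> V \<longrightarrow>
        (\<forall>w\<in>S. cmod (g w) \<le> M) \<longrightarrow> (\<forall>z\<in>S. cmod (L g z) \<le> c * M)) \<and>
     (\<forall>V h S B. real_star_nbhd V \<longrightarrow> (\<forall>m. h m holomorphic_on V) \<longrightarrow> star_shaped_0 S \<longrightarrow>
        S \<subseteq> V \<longrightarrow> (\<forall>m. \<forall>w\<in>S. cmod (h m w) \<le> B m) \<longrightarrow> summable B \<longrightarrow>
        (\<forall>z\<in>S. L (\<lambda>w. \<Sum>m. h m w) z = (\<Sum>m. L (h m) z)))"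

lemma star_bounded_opI:
  assumes "0 \<le> c"
    and "\<And>V g. real_star_nbhd V \<Longrightarrow> g holomorphic_on V \<Longrightarrow> L g holomorphic_on V"
    and "\<And>S F G z. star_shaped_0 S \<Longrightarrow> (\<And>w. w \<in> S \<Longrightarrow> F w = G w) \<Longrightarrow> z \<in> S \<Longrightarrow> L F z = L G z"
    and "\<And>b g. L (\<lambda>w. b * g w) = (\<lambda>z. b * L g z)"
    and "\<And>V g1 g2 z. real_star_nbhd V \<Longrightarrow> g1 holomorphic_on V \<Longrightarrow> g2 holomorphic_on V \<Longrightarrow> z \<in> V \<Longrightarrow>
           L (\<lambda>w. g1 w + g2 w) z = L g1 z + L g2 z"
    and "\<And>V g S M z. real_star_nbhd V \<Longrightarrow> g holomorphic_on V \<Longrightarrow> star_shaped_0 S \<Longrightarrow> S \<subseteq> V \<Longrightarrow>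
           (\<And>w. w \<in> S \<Longrightarrow> cmod (g w) \<le> M) \<Longrightarrow> z \<in> S \<Longrightarrow> cmod (L g z) \<le> c * M"
    and "\<And>V h S B z. real_star_nbhd V \<Longrightarrow> (\<And>m. h m holomorphic_on V) \<Longrightarrow> star_shaped_0 S \<Longrightarrow>
           S \<subseteq> V \<Longrightarrow> (\<And>m w. w \<in> S \<Longrightarrow> cmod (h m w) \<le> B m) \<Longrightarrow> summable B \<Longrightarrow> z \<in> S \<Longrightarrow>
           L (\<lambda>w. \<Sum>m. h m w) z = (\<Sum>m. L (h m) z)"
  shows "star_bounded_op c L"
  unfolding star_bounded_op_def
  by (intro conjI allI impI ballI) (rule assms; (assumption | blast))+

lemma
  assumes "star_bounded_op c L"
  shows star_bounded_op_nonneg: "0 \<le> c"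
    and star_bounded_op_holomorphic:
      "real_star_nbhd V \<Longrightarrow> g holomorphic_on V \<Longrightarrow> L g holomorphic_on V"
    and star_bounded_op_cong:
      "star_shaped_0 S \<Longrightarrow> (\<And>w. w \<in> S \<Longrightarrow> F w = G w) \<Longrightarrow> z \<in> S \<Longrightarrow> L F z = L G z"
    and star_bounded_op_cmult: "L (\<lambda>w. b * g w) = (\<lambda>z. b * L g z)"
    and star_bounded_op_add:
      "real_star_nbhd V \<Longrightarrow> g1 holomorphic_on V \<Longrightarrow> g2 holomorphic_on V \<Longrightarrow> z \<in> V \<Longrightarrow>
       L (\<lambda>w. g1 w + g2 w) z = L g1 z + L g2 z"
    and star_bounded_op_norm_le:
      "real_star_nbhd V \<Longrightarrow> g holomorphic_on V \<Longrightarrow> star_shaped_0 S \<Longrightarrow> S \<subseteq> V \<Longrightarrow>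
       (\<And>w. w \<in> S \<Longrightarrow> cmod (g w) \<le> M) \<Longrightarrow> z \<in> S \<Longrightarrow> cmod (L g z) \<le> c * M"
  using assms unfolding star_bounded_op_def by (simp_all add: Ball_def)

lemma star_bounded_op_suminf:
  assumes "star_bounded_op c L" "real_star_nbhd V" "\<And>m. h m holomorphic_on V" "star_shaped_0 S" "S \<subseteq> V"
    "\<And>m w. w \<in> S \<Longrightarrow> cmod (h m w) \<le> B m" "summable B" "z \<in> S"
  shows "L (\<lambda>w. \<Sum>m. h m w) z = (\<Sum>m. L (h m) z)"
proof -
  have "\<forall>V h S B. real_star_nbhd V \<longrightarrow> (\<forall>m. h m holomorphic_on V) \<longrightarrow> star_shaped_0 S \<longrightarrow>
        S \<subseteq> V \<longrightarrow> (\<forall>m. \<forall>w\<in>S. cmod (h m w) \<le> B m) \<longrightarrow> summable B \<longrightarrow>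
        (\<forall>z\<in>S. L (\<lambda>w. \<Sum>m. h m w) z = (\<Sum>m. L (h m) z))"
    using assms(1) unfolding star_bounded_op_def by (elim conjE)
  then show ?thesis using assms(2-8) by blast
qed

lemma star_bounded_op_hardy_c: "star_bounded_op 1 hardy_c"
proof (rule star_bounded_opI)
  fix V g assume "real_star_nbhd V" "g holomorphic_on V"
  then show "hardy_c g holomorphic_on V"
    by (intro holomorphic_on_hardy_c real_star_nbhd_open real_star_nbhd_star_shaped real_star_nbhd_0)
next
  fix S z and F G :: "complex \<Rightarrow> complex" assume "star_shaped_0 S" "\<And>w. w \<in> S \<Longrightarrow> F w = G w" "z \<in> S"
  then show "hardy_c F z = hardy_c G z" by (meson hardy_c_cong star_shaped_0D subsetD)
next
  fix V g1 g2 z assume V: "real_star_nbhd V" and hol: "g1 holomorphic_on V" "g2 holomorphic_on V"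
    and "z \<in> V"
  then have seg: "closed_segment 0 z \<subseteq> V" by (simp add: real_star_nbhd_star_shaped star_shaped_0D)
  show "hardy_c (\<lambda>w. g1 w + g2 w) z = hardy_c g1 z + hardy_c g2 z"
    using holomorphic_on_subset[OF hol(1) seg] holomorphic_on_subset[OF hol(2) seg]
    by (intro hardy_c_add holomorphic_on_imp_continuous_on)
next
  fix V g S M z assume "real_star_nbhd V" and hol: "g holomorphic_on V" and S: "star_shaped_0 S" "S \<subseteq> V"
    and bound: "\<And>w. w \<in> S \<Longrightarrow> cmod (g w) \<le> M" and "z \<in> S"
  have seg: "closed_segment 0 z \<subseteq> S" by (rule star_shaped_0D[OF S(1) \<open>z \<in> S\<close>])
  have "continuous_on (closed_segment 0 z) g"
    using hol seg S(2) by (meson holomorphic_on_imp_continuous_on holomorphic_on_subset order_trans)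
  then show "cmod (hardy_c g z) \<le> 1 * M" using seg bound by (simp add: hardy_c_norm_le subset_iff)
next
  fix V h S B z assume "real_star_nbhd V" and hol: "\<And>m. h m holomorphic_on V"
    and S: "star_shaped_0 S" "S \<subseteq> V"
    and bound: "\<And>m w. w \<in> S \<Longrightarrow> cmod (h m w) \<le> B m" "summable B" and "z \<in> S"
  have seg: "closed_segment 0 z \<subseteq> S" by (rule star_shaped_0D[OF S(1) \<open>z \<in> S\<close>])
  have "continuous_on (closed_segment 0 z) (h m)" for m
    using hol seg S(2) by (meson holomorphic_on_imp_continuous_on holomorphic_on_subset order_trans)
  then show "hardy_c (\<lambda>w. \<Sum>m. h m w) z = (\<Sum>m. hardy_c (h m) z)"
    using seg bound by (intro hardy_c_suminf) auto
qed (simp_all add: hardy_c_cmult)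

lemma star_bounded_op_id: "star_bounded_op 1 (\<lambda>g. g)"
  by (rule star_bounded_opI) auto

lemma star_bounded_op_comp:
  assumes L: "star_bounded_op c L" and M: "star_bounded_op d M"
  shows "star_bounded_op (c * d) (\<lambda>g. L (M g))"
proof (rule star_bounded_opI)
  show "0 \<le> c * d" using L M by (simp add: star_bounded_op_nonneg)
next
  fix V g assume V: "real_star_nbhd V" and "g holomorphic_on V"
  then show "L (M g) holomorphic_on V"
    by (intro star_bounded_op_holomorphic[OF L V] star_bounded_op_holomorphic[OF M V])
next
  fix S z and F G :: "complex \<Rightarrow> complex"
  assume S: "star_shaped_0 S" and "\<And>w. w \<in> S \<Longrightarrow> F w = G w" "z \<in> S"
  then show "L (M F) z = L (M G) z"
    by (intro star_bounded_op_cong[OF L S] star_bounded_op_cong[OF M S])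
next
  fix b g show "L (M (\<lambda>w. b * g w)) = (\<lambda>z. b * L (M g) z)"
    by (simp add: star_bounded_op_cmult[OF M] star_bounded_op_cmult[OF L])
next
  fix V g1 g2 z assume V: "real_star_nbhd V" and hol: "g1 holomorphic_on V" "g2 holomorphic_on V"
    and "z \<in> V"
  have "M (\<lambda>w. g1 w + g2 w) w = M g1 w + M g2 w" if "w \<in> V" for w
    by (rule star_bounded_op_add[OF M V hol that])
  then have "L (M (\<lambda>w. g1 w + g2 w)) z = L (\<lambda>w. M g1 w + M g2 w) z"
    by (rule star_bounded_op_cong[OF L real_star_nbhd_star_shaped[OF V] _ \<open>z \<in> V\<close>])
  also have "\<dots> = L (M g1) z + L (M g2) z"
    by (rule star_bounded_op_add[OF L V star_bounded_op_holomorphic[OF M V hol(1)]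
          star_bounded_op_holomorphic[OF M V hol(2)] \<open>z \<in> V\<close>])
  finally show "L (M (\<lambda>w. g1 w + g2 w)) z = L (M g1) z + L (M g2) z" .
next
  fix V g S B z assume V: "real_star_nbhd V" and hol: "g holomorphic_on V"
    and S: "star_shaped_0 S" "S \<subseteq> V" and bound: "\<And>w. w \<in> S \<Longrightarrow> cmod (g w) \<le> B" and "z \<in> S"
  have "cmod (L (M g) z) \<le> c * (d * B)"
    by (rule star_bounded_op_norm_le[OF L V star_bounded_op_holomorphic[OF M V hol] S
          star_bounded_op_norm_le[OF M V hol S bound] \<open>z \<in> S\<close>])
  then show "cmod (L (M g) z) \<le> c * d * B" by (simp add: mult.assoc)
next
  fix V h S B z assume V: "real_star_nbhd V" and hol: "\<And>m. h m holomorphic_on V"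
    and S: "star_shaped_0 S" "S \<subseteq> V"
    and bound: "\<And>m w. w \<in> S \<Longrightarrow> cmod (h m w) \<le> B m" "summable B" and "z \<in> S"
  have "M (\<lambda>w. \<Sum>m. h m w) w = (\<Sum>m. M (h m) w)" if "w \<in> S" for w
    by (rule star_bounded_op_suminf[OF M V hol S bound that])
  then have "L (M (\<lambda>w. \<Sum>m. h m w)) z = L (\<lambda>w. \<Sum>m. M (h m) w) z"
    by (rule star_bounded_op_cong[OF L S(1) _ \<open>z \<in> S\<close>])
  also have "\<dots> = (\<Sum>m. L (M (h m)) z)"
    by (rule star_bounded_op_suminf[OF L V star_bounded_op_holomorphic[OF M V hol] S
          star_bounded_op_norm_le[OF M V hol S bound(1)] summable_mult[OF bound(2)] \<open>z \<in> S\<close>])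
  finally show "L (M (\<lambda>w. \<Sum>m. h m w)) z = (\<Sum>m. L (M (h m)) z)" .
qed

lemma star_bounded_op_funpow: "star_bounded_op c L \<Longrightarrow> star_bounded_op (c ^ n) (L ^^ n)"
proof (induction n)
  case 0 then show ?case using star_bounded_op_id by (simp add: id_def)
next
  case (Suc n)
  have "star_bounded_op (c * c ^ n) (\<lambda>g. L ((L ^^ n) g))"
    using star_bounded_op_comp[OF Suc.prems Suc.IH[OF Suc.prems]] .
  then show ?case by (simp add: comp_def)
qed

lemma star_bounded_op_sum:
  assumes L: "\<And>i. i \<in> I \<Longrightarrow> star_bounded_op (c i) (L i)"
  shows "star_bounded_op (\<Sum>i\<in>I. cmod (a i) * c i) (\<lambda>g z. \<Sum>i\<in>I. a i * L i g z)"
proof (rule star_bounded_opI)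
  show "0 \<le> (\<Sum>i\<in>I. cmod (a i) * c i)"
    by (intro sum_nonneg mult_nonneg_nonneg norm_ge_zero star_bounded_op_nonneg[OF L])
next
  fix V g assume V: "real_star_nbhd V" and hol: "g holomorphic_on V"
  have "L i g holomorphic_on V" if "i \<in> I" for i by (rule star_bounded_op_holomorphic[OF L[OF that] V hol])
  then show "(\<lambda>z. \<Sum>i\<in>I. a i * L i g z) holomorphic_on V"
    by (intro holomorphic_on_sum holomorphic_on_mult holomorphic_on_const)
next
  fix S z and F G :: "complex \<Rightarrow> complex"
  assume S: "star_shaped_0 S" and eq: "\<And>w. w \<in> S \<Longrightarrow> F w = G w" and "z \<in> S"
  have "L i F z = L i G z" if "i \<in> I" for i by (rule star_bounded_op_cong[OF L[OF that] S eq \<open>z \<in> S\<close>])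
  then show "(\<Sum>i\<in>I. a i * L i F z) = (\<Sum>i\<in>I. a i * L i G z)" by simp
next
  fix b g show "(\<lambda>z. \<Sum>i\<in>I. a i * L i (\<lambda>w. b * g w) z) = (\<lambda>z. b * (\<Sum>i\<in>I. a i * L i g z))"
    by (simp add: star_bounded_op_cmult[OF L] sum_distrib_left mult.left_commute)
next
  fix V g1 g2 z assume V: "real_star_nbhd V" and hol: "g1 holomorphic_on V" "g2 holomorphic_on V"
    and "z \<in> V"
  have "L i (\<lambda>w. g1 w + g2 w) z = L i g1 z + L i g2 z" if "i \<in> I" for i
    by (rule star_bounded_op_add[OF L[OF that] V hol \<open>z \<in> V\<close>])
  then show "(\<Sum>i\<in>I. a i * L i (\<lambda>w. g1 w + g2 w) z) =
             (\<Sum>i\<in>I. a i * L i g1 z) + (\<Sum>i\<in>I. a i * L i g2 z)"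
    by (simp add: distrib_left sum.distrib)
next
  fix V g S M z assume V: "real_star_nbhd V" and hol: "g holomorphic_on V"
    and S: "star_shaped_0 S" "S \<subseteq> V" and bound: "\<And>w. w \<in> S \<Longrightarrow> cmod (g w) \<le> M" and "z \<in> S"
  have "cmod (\<Sum>i\<in>I. a i * L i g z) \<le> (\<Sum>i\<in>I. cmod (a i * L i g z))" by (rule norm_sum)
  also have "\<dots> \<le> (\<Sum>i\<in>I. cmod (a i) * (c i * M))"
  proof (rule sum_mono)
    fix i assume "i \<in> I"
    show "cmod (a i * L i g z) \<le> cmod (a i) * (c i * M)"
      unfolding norm_mult
      by (intro mult_left_mono norm_ge_zero star_bounded_op_norm_le[OF L[OF \<open>i \<in> I\<close>] V hol S bound \<open>z \<in> S\<close>])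
  qed
  also have "\<dots> = (\<Sum>i\<in>I. cmod (a i) * c i) * M" by (simp add: sum_distrib_right mult.assoc)
  finally show "cmod (\<Sum>i\<in>I. a i * L i g z) \<le> (\<Sum>i\<in>I. cmod (a i) * c i) * M" .
next
  fix V h S B z assume V: "real_star_nbhd V" and hol: "\<And>m. h m holomorphic_on V"
    and S: "star_shaped_0 S" "S \<subseteq> V"
    and bound: "\<And>m w. w \<in> S \<Longrightarrow> cmod (h m w) \<le> B m" "summable B" and "z \<in> S"
  have summable: "summable (\<lambda>m. L i (h m) z)" if "i \<in> I" for i
    by (rule summable_comparison_test'[OF summable_mult[OF bound(2)]])
       (rule star_bounded_op_norm_le[OF L[OF that] V hol S bound(1) \<open>z \<in> S\<close>])
  have "L i (\<lambda>w. \<Sum>m. h m w) z = (\<Sum>m. L i (h m) z)" if "i \<in> I" for i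
    by (rule star_bounded_op_suminf[OF L[OF that] V hol S bound \<open>z \<in> S\<close>])
  then have "(\<Sum>i\<in>I. a i * L i (\<lambda>w. \<Sum>m. h m w) z) = (\<Sum>i\<in>I. \<Sum>m. a i * L i (h m) z)"
    using summable by (simp add: suminf_mult)
  also have "\<dots> = (\<Sum>m. \<Sum>i\<in>I. a i * L i (h m) z)"
    using summable by (intro suminf_sum[symmetric] summable_mult)
  finally show "(\<Sum>i\<in>I. a i * L i (\<lambda>w. \<Sum>m. h m w) z) = (\<Sum>m. \<Sum>i\<in>I. a i * L i (h m) z)" .
qed

definition hardy_c_poly :: "nat \<Rightarrow> (nat \<Rightarrow> complex) \<Rightarrow> (complex \<Rightarrow> complex) \<Rightarrow> complex \<Rightarrow> complex" where
  "hardy_c_poly K a g = (\<lambda>z. \<Sum>k\<le>K. a k * (hardy_c ^^ k) g z)"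

lemma star_bounded_op_hardy_c_poly: "star_bounded_op (\<Sum>k\<le>K. cmod (a k)) (hardy_c_poly K a)"
  using star_bounded_op_sum[of "{..K}" "\<lambda>_. 1" "\<lambda>k. hardy_c ^^ k" a]
    star_bounded_op_funpow[OF star_bounded_op_hardy_c]
  by (simp add: hardy_c_poly_def[abs_def])

lemma hardy_funpow_eq_hardy_c:
  assumes V: "real_star_nbhd V" and hol: "g holomorphic_on V"
  shows "(hardy ^^ k) (\<lambda>x. g (complex_of_real x)) = (\<lambda>x. (hardy_c ^^ k) g (complex_of_real x))"
proof (induction k)
  case 0 then show ?case by simp
next
  case (Suc k)
  have "continuous_on (closed_segment 0 (complex_of_real x)) ((hardy_c ^^ k) g)" for x
    using star_bounded_op_holomorphic[OF star_bounded_op_funpow[OF star_bounded_op_hardy_c] V hol]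
      star_shaped_0D[OF real_star_nbhd_star_shaped[OF V] real_star_nbhd_real[OF V]]
    by (meson holomorphic_on_imp_continuous_on holomorphic_on_subset)
  then show ?case using Suc.IH by (simp add: hardy_eq_hardy_c)
qed

lemma hardy_poly_eq_hardy_c_poly:
  assumes "real_star_nbhd V" and "g holomorphic_on V"
  shows "hardy_poly K a (\<lambda>x. g (complex_of_real x)) = (\<lambda>x. hardy_c_poly K a g (complex_of_real x))"
  by (simp add: hardy_poly_def hardy_c_poly_def hardy_funpow_eq_hardy_c[OF assms])

lemma hardy_poly_funpow_eq_hardy_c_poly:
  assumes V: "real_star_nbhd V" and hol: "g holomorphic_on V"
  shows "(hardy_poly K a ^^ n) (\<lambda>x. g (complex_of_real x)) =
         (\<lambda>x. (hardy_c_poly K a ^^ n) g (complex_of_real x))"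
proof (induction n)
  case 0 then show ?case by simp
next
  case (Suc n)
  have "(hardy_c_poly K a ^^ n) g holomorphic_on V"
    by (rule star_bounded_op_holomorphic[OF star_bounded_op_funpow[OF star_bounded_op_hardy_c_poly] V hol])
  then show ?case
    using Suc.IH by (simp only: funpow.simps o_apply hardy_poly_eq_hardy_c_poly[OF V])
qed

section \<open>Exponential series with geometrically bounded coefficients\<close>

lemma sums_exp_mult: "(\<lambda>n. x ^ n / fact n * M) sums (exp x * M)" for x :: real
  using sums_mult2[OF exp_converges[of x]] by (simp add: divide_inverse mult.commute)

lemma infsum_eq_suminf:
  fixes f :: "nat \<Rightarrow> 'a::banach"
  assumes "summable (\<lambda>n. norm (f n))"
  shows "infsum f UNIV = suminf f"
proof -
  have "f sums suminf f" using summable_norm_cancel[OF assms] by (rule summable_sums)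
  then show ?thesis by (intro infsumI norm_summable_imp_has_sum[OF assms])
qed

lemma power_add_div_fact:
  fixes t s :: "'a::field_char_0"
  shows "(t + s) ^ N / fact N = (\<Sum>i\<le>N. t ^ i / fact i * (s ^ (N - i) / fact (N - i)))"
proof -
  have "(t + s) ^ N / fact N = (\<Sum>i\<le>N. of_nat (N choose i) * t ^ i * s ^ (N - i) / fact N)"
    by (simp add: binomial_ring sum_divide_distrib)
  also have "\<dots> = (\<Sum>i\<le>N. t ^ i / fact i * (s ^ (N - i) / fact (N - i)))"
  proof (rule sum.cong[OF refl])
    fix i assume "i \<in> {..N}"
    then have "(of_nat (N choose i) :: 'a) = fact N / (fact i * fact (N - i))"
      by (intro binomial_fact) auto
    then show "of_nat (N choose i) * t ^ i * s ^ (N - i) / fact N = t ^ i / fact i * (s ^ (N - i) / fact (N - i))"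
      by (simp add: field_simps)
  qed
  finally show ?thesis .
qed

context
  fixes u :: "nat \<Rightarrow> complex" and c M :: real
  assumes u_norm_le: "\<And>n. cmod (u n) \<le> c ^ n * M" and c_nonneg: "0 \<le> c"
begin

lemma exp_series_bound_nonneg: "0 \<le> M"
  using u_norm_le[of 0] by simp (meson norm_ge_zero order_trans)

lemma exp_series_term_norm_le: "cmod (t ^ n / fact n * u n) \<le> (cmod t * c) ^ n / fact n * M"
proof -
  have "cmod (t ^ n / fact n * u n) = cmod t ^ n / fact n * cmod (u n)"
    by (simp add: norm_mult norm_divide norm_power)
  also have "\<dots> \<le> cmod t ^ n / fact n * (c ^ n * M)"
    by (intro mult_left_mono u_norm_le) auto
  finally show ?thesis by (simp add: power_mult_distrib)
qed

lemma exp_series_norm_summable: "summable (\<lambda>n. cmod (t ^ n / fact n * u n))"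
  by (rule summable_comparison_test'[OF sums_summable[OF sums_exp_mult[of "cmod t * c" M]]])
     (simp only: real_norm_def abs_norm_cancel exp_series_term_norm_le)

lemma exp_series_summable: "summable (\<lambda>n. t ^ n / fact n * u n)"
  by (rule summable_norm_cancel[OF exp_series_norm_summable])

lemma exp_series_norm_le: "cmod (\<Sum>n. t ^ n / fact n * u n) \<le> exp (cmod t * c) * M"
  using norm_suminf_le[OF exp_series_term_norm_le sums_summable[OF sums_exp_mult]] sums_exp_mult
  by (simp add: sums_iff)

lemma exp_series_minus_head_norm_le:
  "cmod ((\<Sum>n. t ^ n / fact n * u n) - u 0) \<le> cmod t * c * exp (cmod t * c) * M"
proof -
  define x where "x = cmod t * c"
  have "0 \<le> x" using c_nonneg by (simp add: x_def)
  have term_le: "cmod (t ^ Suc n / fact (Suc n) * u (Suc n)) \<le> x * (x ^ n / fact n * M)" for n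
  proof -
    have "cmod (t ^ Suc n / fact (Suc n) * u (Suc n)) \<le> x ^ Suc n / fact (Suc n) * M"
      unfolding x_def by (rule exp_series_term_norm_le)
    also have "\<dots> \<le> x ^ Suc n / fact n * M"
      using \<open>0 \<le> x\<close> exp_series_bound_nonneg
      by (intro mult_right_mono divide_left_mono fact_mono) auto
    finally show ?thesis by simp
  qed
  have "cmod ((\<Sum>n. t ^ n / fact n * u n) - u 0) = cmod (\<Sum>n. t ^ Suc n / fact (Suc n) * u (Suc n))"
    using suminf_split_head[OF exp_series_summable] by simp
  also have "\<dots> \<le> (\<Sum>n. x * (x ^ n / fact n * M))"
    by (rule norm_suminf_le[OF term_le summable_mult[OF sums_summable[OF sums_exp_mult]]])
  also have "\<dots> = x * (exp x * M)" using sums_mult[OF sums_exp_mult] by (simp add: sums_iff)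
  finally show ?thesis by (simp only: x_def mult.assoc)
qed

lemma exp_series_diff_quotient_norm_le:
  assumes "t \<noteq> 0"
  shows "cmod (((\<Sum>n. t ^ n / fact n * u n) - u 0) / t - u 1) \<le> cmod t * c\<^sup>2 * exp (cmod t * c) * M"
proof -
  define x where "x = cmod t * c"
  have "0 \<le> x" using c_nonneg by (simp add: x_def)
  have term_le: "cmod (t ^ (n + 2) / fact (n + 2) * u (n + 2) / t) \<le> (cmod t * c\<^sup>2) * (x ^ n / fact n * M)"
    for n
  proof -
    have "cmod (t ^ (n + 2) / fact (n + 2) * u (n + 2) / t) \<le> (x ^ (n + 2) / fact (n + 2) * M) / cmod t"
      unfolding norm_divide[of _ t] x_def by (intro divide_right_mono exp_series_term_norm_le) auto
    also have "\<dots> \<le> (x ^ (n + 2) / fact n * M) / cmod t"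
      using \<open>0 \<le> x\<close> exp_series_bound_nonneg
      by (intro divide_right_mono mult_right_mono divide_left_mono fact_mono) auto
    also have "\<dots> = (cmod t * c\<^sup>2) * (x ^ n / fact n * M)"
      using assms by (simp add: x_def field_simps power_add power2_eq_square)
    finally show ?thesis .
  qed
  have "(\<Sum>n. t ^ n / fact n * u n) =
        (\<Sum>n. t ^ (n + 2) / fact (n + 2) * u (n + 2)) + (\<Sum>i<2. t ^ i / fact i * u i)"
    by (rule suminf_split_initial_segment[OF exp_series_summable])
  then have "((\<Sum>n. t ^ n / fact n * u n) - u 0) / t - u 1 =
             (\<Sum>n. t ^ (n + 2) / fact (n + 2) * u (n + 2)) / t"
    using assms by (simp add: numeral_2_eq_2 field_simps)
  also have "\<dots> = (\<Sum>n. t ^ (n + 2) / fact (n + 2) * u (n + 2) / t)"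
    by (rule suminf_divide[symmetric], rule summable_ignore_initial_segment[OF exp_series_summable])
  finally have "cmod (((\<Sum>n. t ^ n / fact n * u n) - u 0) / t - u 1) =
                cmod (\<Sum>n. t ^ (n + 2) / fact (n + 2) * u (n + 2) / t)"
    by (rule arg_cong)
  also have "\<dots> \<le> (\<Sum>n. (cmod t * c\<^sup>2) * (x ^ n / fact n * M))"
    by (rule norm_suminf_le[OF term_le summable_mult[OF sums_summable[OF sums_exp_mult]]])
  also have "\<dots> = (cmod t * c\<^sup>2) * (exp x * M)"
    using sums_mult[OF sums_exp_mult] by (simp add: sums_iff)
  finally show ?thesis by (simp only: x_def mult.assoc)
qed

end

lemma exp_series_double_summable:
  fixes u :: "nat \<Rightarrow> complex"
  assumes u_norm_le: "\<And>n. cmod (u n) \<le> c ^ n * M" and c_nonneg: "0 \<le> c"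
  shows "(\<lambda>(n, m). t ^ n / fact n * (s ^ m / fact m * u (n + m))) summable_on UNIV"
proof -
  define F where "F = (\<lambda>(n, m). t ^ n / fact n * (s ^ m / fact m * u (n + m)))"
  define G where "G p = (cmod t * c) ^ fst p / fact (fst p) * ((cmod s * c) ^ snd p / fact (snd p) * M)"
    for p :: "nat \<times> nat"
  have "0 \<le> M" by (rule exp_series_bound_nonneg[OF u_norm_le c_nonneg])
  have G_nonneg: "0 \<le> G p" for p using c_nonneg \<open>0 \<le> M\<close> by (simp add: G_def)
  have rows: "((\<lambda>m. G (n, m)) has_sum ((cmod t * c) ^ n / fact n * (exp (cmod s * c) * M))) UNIV" for n
  proof -
    have "(\<lambda>m. G (n, m)) sums ((cmod t * c) ^ n / fact n * (exp (cmod s * c) * M))"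
      unfolding G_def fst_conv snd_conv by (rule sums_mult[OF sums_exp_mult])
    then show ?thesis by (rule sums_nonneg_imp_has_sum) (rule G_nonneg)
  qed
  have "((\<lambda>n. (cmod t * c) ^ n / fact n * (exp (cmod s * c) * M)) has_sum
          (exp (cmod t * c) * (exp (cmod s * c) * M))) UNIV"
    by (rule sums_nonneg_imp_has_sum[OF sums_exp_mult]) (use c_nonneg \<open>0 \<le> M\<close> in simp)
  then have "(\<lambda>n. (cmod t * c) ^ n / fact n * (exp (cmod s * c) * M)) summable_on UNIV"
    unfolding summable_on_def by blast
  then have "G summable_on Sigma UNIV (\<lambda>_. UNIV)" by (rule summable_on_SigmaI[OF rows _ G_nonneg])
  then have G: "G summable_on UNIV" by simp
  have "norm (F p) \<le> G p" for p
  proof (cases p)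
    case (Pair n m)
    have "norm (F p) = cmod t ^ n / fact n * (cmod s ^ m / fact m * cmod (u (n + m)))"
      by (simp add: Pair F_def norm_mult norm_divide norm_power)
    also have "\<dots> \<le> cmod t ^ n / fact n * (cmod s ^ m / fact m * (c ^ (n + m) * M))"
      by (intro mult_left_mono u_norm_le) auto
    also have "\<dots> = G p" by (simp add: Pair G_def power_add power_mult_distrib)
    finally show ?thesis .
  qed
  then have "(\<lambda>p. norm (F p)) summable_on UNIV" by (intro summable_on_comparison_test[OF G]) auto
  then show ?thesis unfolding F_def by (rule abs_summable_summable)
qed

text \<open>The group law \<open>exp (t A) exp (s A) = exp ((t + s) A)\<close> at the level of coefficients:
  summing the absolutely summable double series by rows gives the left-hand side, summing it
  along the diagonals \<open>n + m = N\<close> gives the right-hand side.\<close>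

lemma exp_series_add:
  fixes u :: "nat \<Rightarrow> complex"
  assumes u_norm_le: "\<And>n. cmod (u n) \<le> c ^ n * M" and c_nonneg: "0 \<le> c"
  shows "(\<Sum>n. t ^ n / fact n * (\<Sum>m. s ^ m / fact m * u (n + m))) = (\<Sum>N. (t + s) ^ N / fact N * u N)"
proof -
  define F where "F = (\<lambda>(n, m). t ^ n / fact n * (s ^ m / fact m * u (n + m)))"
  have F: "F summable_on UNIV" unfolding F_def by (rule exp_series_double_summable[OF u_norm_le c_nonneg])
  have shifted_norm_le: "cmod (u (n + m)) \<le> c ^ m * (c ^ n * M)" for n m
    using u_norm_le[of "n + m"] by (simp add: power_add mult_ac)
  have row: "infsum (\<lambda>m. F (n, m)) UNIV = t ^ n / fact n * (\<Sum>m. s ^ m / fact m * u (n + m))" for n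
  proof -
    have "summable (\<lambda>m. norm (t ^ n / fact n * (s ^ m / fact m * u (n + m))))"
      using summable_mult[OF exp_series_norm_summable[OF shifted_norm_le[of n] c_nonneg],
          of "cmod (t ^ n / fact n)"]
      by (simp only: norm_mult)
    then have "infsum (\<lambda>m. F (n, m)) UNIV = (\<Sum>m. t ^ n / fact n * (s ^ m / fact m * u (n + m)))"
      unfolding F_def case_prod_conv by (rule infsum_eq_suminf)
    also have "\<dots> = t ^ n / fact n * (\<Sum>m. s ^ m / fact m * u (n + m))"
      by (rule suminf_mult[OF exp_series_summable[OF shifted_norm_le[of n] c_nonneg]])
    finally show ?thesis .
  qed
  have "cmod (\<Sum>m. s ^ m / fact m * u (n + m)) \<le> c ^ n * (exp (cmod s * c) * M)" for n
    using exp_series_norm_le[OF shifted_norm_le[of n] c_nonneg, of s] by (simp add: mult_ac)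
  then have rows_norm_summable:
    "summable (\<lambda>n. cmod (t ^ n / fact n * (\<Sum>m. s ^ m / fact m * u (n + m))))"
    by (rule exp_series_norm_summable[OF _ c_nonneg])
  define \<phi> where "\<phi> q = (snd q, fst q - snd q)" for q :: "nat \<times> nat"
  have \<phi>: "bij_betw \<phi> (Sigma UNIV (\<lambda>N. {..N})) UNIV"
    by (rule bij_betw_byWitness[where f' = "\<lambda>p. (fst p + snd p, fst p)"]) (auto simp: \<phi>_def)
  have diagonal: "(t + s) ^ N / fact N * u N = (\<Sum>i\<le>N. F (\<phi> (N, i)))" for N
  proof -
    have "F (\<phi> (N, i)) = t ^ i / fact i * (s ^ (N - i) / fact (N - i)) * u N" if "i \<le> N" for i
      using that by (simp add: F_def \<phi>_def)
    then show ?thesis by (simp add: power_add_div_fact sum_distrib_right)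
  qed
  have "(\<Sum>n. t ^ n / fact n * (\<Sum>m. s ^ m / fact m * u (n + m))) =
        infsum (\<lambda>n. t ^ n / fact n * (\<Sum>m. s ^ m / fact m * u (n + m))) UNIV"
    by (rule infsum_eq_suminf[OF rows_norm_summable, symmetric])
  also have "\<dots> = infsum (\<lambda>n. infsum (\<lambda>m. F (n, m)) UNIV) UNIV" by (simp only: row)
  also have "\<dots> = infsum F (Sigma UNIV (\<lambda>_. UNIV))" using F by (intro infsum_Sigma_banach) simp
  also have "\<dots> = infsum (\<lambda>q. F (\<phi> q)) (Sigma UNIV (\<lambda>N. {..N}))"
    using infsum_reindex_bij_betw[OF \<phi>, of F] by simp
  also have "\<dots> = infsum (\<lambda>N. infsum (\<lambda>i. F (\<phi> (N, i))) {..N}) UNIV"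
    using summable_on_reindex_bij_betw[OF \<phi>, of F] F by (intro infsum_Sigma_banach[symmetric]) simp
  also have "\<dots> = infsum (\<lambda>N. (t + s) ^ N / fact N * u N) UNIV"
    by (intro infsum_cong) (simp only: infsum_finite[OF finite_atMost] diagonal)
  also have "\<dots> = (\<Sum>N. (t + s) ^ N / fact N * u N)"
    by (rule infsum_eq_suminf[OF exp_series_norm_summable[OF u_norm_le c_nonneg]])
  finally show ?thesis .
qed

lemma uniform_limit_if_dist_le:
  assumes "(\<psi> \<longlongrightarrow> 0) F" "eventually (\<lambda>t. \<forall>z\<in>S. dist (h t z) (g z) \<le> \<psi> t) F"
  shows "uniform_limit S h g F"
proof (rule uniform_limitI)
  fix e :: real assume "0 < e"
  with assms(1) have "eventually (\<lambda>t. \<psi> t < e) F" by (rule order_tendstoD)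
  with assms(2) show "eventually (\<lambda>t. \<forall>z\<in>S. dist (h t z) (g z) < e) F"
    by eventually_elim (meson le_less_trans)
qed

section \<open>The exponential of a star-bounded operator\<close>

definition op_exp ::
  "((complex \<Rightarrow> complex) \<Rightarrow> complex \<Rightarrow> complex) \<Rightarrow> complex \<Rightarrow> (complex \<Rightarrow> complex) \<Rightarrow> complex \<Rightarrow> complex"
  where "op_exp L t g z = (\<Sum>n. t ^ n / fact n * (L ^^ n) g z)"

context
  fixes c L V g
  assumes L: "star_bounded_op c L" and V: "real_star_nbhd V" and hol: "g holomorphic_on V"
begin

lemma funpow_star_bounded_norm_le:
  "star_shaped_0 S \<Longrightarrow> S \<subseteq> V \<Longrightarrow> (\<And>w. w \<in> S \<Longrightarrow> cmod (g w) \<le> M) \<Longrightarrow> z \<in> S \<Longrightarrow>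
   cmod ((L ^^ n) g z) \<le> c ^ n * M"
  by (rule star_bounded_op_norm_le[OF star_bounded_op_funpow[OF L] V hol])

lemma holomorphic_on_funpow_star_bounded: "(L ^^ n) g holomorphic_on V"
  by (rule star_bounded_op_holomorphic[OF star_bounded_op_funpow[OF L] V hol])

lemma star_shaped_superset_bounded:
  assumes "compact K" "K \<subseteq> V"
  obtains S M where "compact S" "K \<subseteq> S" "S \<subseteq> V" "star_shaped_0 S" "\<And>w. w \<in> S \<Longrightarrow> cmod (g w) \<le> M"
proof -
  obtain S where S: "compact S" "K \<subseteq> S" "S \<subseteq> V" "star_shaped_0 S"
    using compact_star_shaped_0_superset[OF assms real_star_nbhd_star_shaped[OF V]] by blast
  moreover obtain M where "\<And>w. w \<in> S \<Longrightarrow> cmod (g w) \<le> M"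
    using continuous_on_compact_bound[OF S(1) holomorphic_on_imp_continuous_on[OF holomorphic_on_subset[OF hol S(3)]]]
    by blast
  ultimately show ?thesis using that by blast
qed

context
  fixes S M
  assumes S: "star_shaped_0 S" "S \<subseteq> V" and bound: "\<And>w. w \<in> S \<Longrightarrow> cmod (g w) \<le> M"
begin

lemma op_exp_norm_le: "z \<in> S \<Longrightarrow> cmod (op_exp L t g z) \<le> exp (cmod t * c) * M"
  unfolding op_exp_def
  by (rule exp_series_norm_le[OF funpow_star_bounded_norm_le[OF S bound] star_bounded_op_nonneg[OF L]])

lemma op_exp_minus_norm_le:
  "z \<in> S \<Longrightarrow> cmod (op_exp L t g z - g z) \<le> cmod t * c * exp (cmod t * c) * M"
  unfolding op_exp_def
  using exp_series_minus_head_norm_le[OF funpow_star_bounded_norm_le[OF S bound] star_bounded_op_nonneg[OF L]]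
  by simp

lemma op_exp_diff_quotient_norm_le:
  "z \<in> S \<Longrightarrow> t \<noteq> 0 \<Longrightarrow>
   cmod ((op_exp L t g z - g z) / t - L g z) \<le> cmod t * c\<^sup>2 * exp (cmod t * c) * M"
  unfolding op_exp_def
  using exp_series_diff_quotient_norm_le[OF funpow_star_bounded_norm_le[OF S bound] star_bounded_op_nonneg[OF L]]
  by simp

end

lemma op_exp_summable:
  assumes "z \<in> V"
  shows "summable (\<lambda>n. t ^ n / fact n * (L ^^ n) g z)"
proof -
  have "compact {z}" "{z} \<subseteq> V" using assms by auto
  then obtain S M where S: "compact S" "{z} \<subseteq> S" "S \<subseteq> V" "star_shaped_0 S"
    and M: "\<And>w. w \<in> S \<Longrightarrow> cmod (g w) \<le> M"
    by (rule star_shaped_superset_bounded) blast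
  have "z \<in> S" using S(2) by simp
  show ?thesis
    by (rule exp_series_summable[OF funpow_star_bounded_norm_le[OF S(4,3) M \<open>z \<in> S\<close>] star_bounded_op_nonneg[OF L]])
qed

lemma holomorphic_on_op_exp: "op_exp L t g holomorphic_on V"
proof (rule holomorphic_uniform_sequence[where f = "\<lambda>n z. \<Sum>i<n. t ^ i / fact i * (L ^^ i) g z"])
  show "open V" using real_star_nbhd_open[OF V] .
  show "(\<lambda>z. \<Sum>i<n. t ^ i / fact i * (L ^^ i) g z) holomorphic_on V" for n
    by (intro holomorphic_on_sum holomorphic_on_mult holomorphic_on_const holomorphic_on_funpow_star_bounded)
  fix x assume "x \<in> V"
  then obtain d where d: "d > 0" "cball x d \<subseteq> V"
    using real_star_nbhd_open[OF V] open_contains_cball by blast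
  obtain S M where S: "compact S" "cball x d \<subseteq> S" "S \<subseteq> V" "star_shaped_0 S"
    and M: "\<And>w. w \<in> S \<Longrightarrow> cmod (g w) \<le> M"
    using star_shaped_superset_bounded[OF compact_cball d(2)] by blast
  have "uniform_limit S (\<lambda>n z. \<Sum>i<n. t ^ i / fact i * (L ^^ i) g z) (op_exp L t g) sequentially"
    unfolding op_exp_def
  proof (rule Weierstrass_m_test)
    show "summable (\<lambda>n. (cmod t * c) ^ n / fact n * M)" by (rule sums_summable[OF sums_exp_mult])
    fix n w assume "w \<in> S"
    show "norm (t ^ n / fact n * (L ^^ n) g w) \<le> (cmod t * c) ^ n / fact n * M"
      by (rule exp_series_term_norm_le[OF funpow_star_bounded_norm_le[OF S(4,3) M \<open>w \<in> S\<close>]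
            star_bounded_op_nonneg[OF L]])
  qed
  then show "\<exists>d>0. cball x d \<subseteq> V \<and>
      uniform_limit (cball x d) (\<lambda>n z. \<Sum>i<n. t ^ i / fact i * (L ^^ i) g z) (op_exp L t g) sequentially"
    using d S(2) uniform_limit_on_subset by blast
qed

lemma op_exp_cmult:
  assumes "z \<in> V"
  shows "op_exp L t (\<lambda>w. b * g w) z = b * op_exp L t g z"
proof -
  have "op_exp L t (\<lambda>w. b * g w) z = (\<Sum>n. b * (t ^ n / fact n * (L ^^ n) g z))"
    by (simp add: op_exp_def star_bounded_op_cmult[OF star_bounded_op_funpow[OF L]] mult.left_commute)
  also have "\<dots> = b * op_exp L t g z"
    unfolding op_exp_def by (rule suminf_mult[OF op_exp_summable[OF assms]])
  finally show ?thesis .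
qed

lemma op_exp_add_time:
  assumes "z \<in> V"
  shows "op_exp L t (op_exp L s g) z = op_exp L (t + s) g z"
proof -
  have "compact {z}" "{z} \<subseteq> V" using assms by auto
  then obtain S M where S: "compact S" "{z} \<subseteq> S" "S \<subseteq> V" "star_shaped_0 S"
    and M: "\<And>w. w \<in> S \<Longrightarrow> cmod (g w) \<le> M"
    by (rule star_shaped_superset_bounded) blast
  have "z \<in> S" using S(2) by simp
  have L_bound: "cmod ((L ^^ n) g w) \<le> c ^ n * M" if "w \<in> S" for n w
    by (rule funpow_star_bounded_norm_le[OF S(4,3)]) (use M that in auto)
  define h where "h m w = s ^ m / fact m * (L ^^ m) g w" for m w
  have h_hol: "h m holomorphic_on V" for m
    unfolding h_def by (intro holomorphic_on_mult holomorphic_on_const holomorphic_on_funpow_star_bounded)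
  have h_bound: "cmod (h m w) \<le> (cmod s * c) ^ m / fact m * M" if "w \<in> S" for m w
    unfolding h_def by (rule exp_series_term_norm_le[OF L_bound[OF that] star_bounded_op_nonneg[OF L]])
  have inner: "op_exp L s g = (\<lambda>w. \<Sum>m. h m w)" by (simp add: op_exp_def h_def fun_eq_iff)
  have suminf: "(L ^^ n) (\<lambda>w. \<Sum>m. h m w) z = (\<Sum>m. (L ^^ n) (h m) z)" for n
    by (rule star_bounded_op_suminf[OF star_bounded_op_funpow[OF L] V h_hol S(4,3) h_bound
          sums_summable[OF sums_exp_mult] \<open>z \<in> S\<close>])
  have shift: "(L ^^ n) (h m) z = s ^ m / fact m * (L ^^ (n + m)) g z" for n m
    unfolding h_def star_bounded_op_cmult[OF star_bounded_op_funpow[OF L]] by (simp add: funpow_add)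
  have "op_exp L t (op_exp L s g) z = (\<Sum>n. t ^ n / fact n * (\<Sum>m. s ^ m / fact m * (L ^^ (n + m)) g z))"
    by (simp only: op_exp_def inner suminf shift)
  also have "\<dots> = op_exp L (t + s) g z"
    unfolding op_exp_def by (rule exp_series_add[OF L_bound[OF \<open>z \<in> S\<close>] star_bounded_op_nonneg[OF L]])
  finally show ?thesis .
qed

end

lemma op_exp_add:
  assumes L: "star_bounded_op c L" and V: "real_star_nbhd V"
    and hol: "g1 holomorphic_on V" "g2 holomorphic_on V" and z: "z \<in> V"
  shows "op_exp L t (\<lambda>w. g1 w + g2 w) z = op_exp L t g1 z + op_exp L t g2 z"
  unfolding op_exp_def
  using star_bounded_op_add[OF star_bounded_op_funpow[OF L] V hol z]
    suminf_add[OF op_exp_summable[OF L V hol(1) z] op_exp_summable[OF L V hol(2) z]]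
  by (simp add: algebra_simps)

lemma op_exp_diff:
  assumes L: "star_bounded_op c L" and V: "real_star_nbhd V"
    and hol: "g1 holomorphic_on V" "g2 holomorphic_on V" and z: "z \<in> V"
  shows "op_exp L t (\<lambda>w. g1 w - g2 w) z = op_exp L t g1 z - op_exp L t g2 z"
proof -
  have "(\<lambda>w. (-1) * g2 w) holomorphic_on V" by (intro holomorphic_intros hol)
  then show ?thesis
    using op_exp_add[OF L V hol(1) _ z, of "\<lambda>w. (-1) * g2 w"] op_exp_cmult[OF L V hol(2) z, of t "-1"]
    by simp
qed

context
  fixes c L V g
  assumes L: "star_bounded_op c L" and V: "real_star_nbhd V" and hol: "g holomorphic_on V"
begin

lemma op_exp_minus_time_norm_le:
  assumes S: "star_shaped_0 S" "S \<subseteq> V" and bound: "\<And>w. w \<in> S \<Longrightarrow> cmod (g w) \<le> M" and "z \<in> S"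
  shows "cmod (op_exp L t g z - op_exp L t0 g z) \<le>
         exp (cmod t0 * c) * (cmod (t - t0) * c * exp (cmod (t - t0) * c) * M)"
proof -
  have "z \<in> V" using assms by auto
  have diff_hol: "(\<lambda>w. op_exp L (t - t0) g w - g w) holomorphic_on V"
    by (intro holomorphic_intros holomorphic_on_op_exp[OF L V hol] hol)
  have "op_exp L t g z - op_exp L t0 g z = op_exp L t0 (\<lambda>w. op_exp L (t - t0) g w - g w) z"
    using op_exp_add_time[OF L V hol \<open>z \<in> V\<close>, of t0 "t - t0"]
    by (simp add: op_exp_diff[OF L V holomorphic_on_op_exp[OF L V hol] hol \<open>z \<in> V\<close>])
  also have "cmod \<dots> \<le> exp (cmod t0 * c) * (cmod (t - t0) * c * exp (cmod (t - t0) * c) * M)"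
    using op_exp_minus_norm_le[OF L V hol S bound] \<open>z \<in> S\<close>
    by (intro op_exp_norm_le[OF L V diff_hol S]) auto
  finally show ?thesis .
qed

lemma uniform_limit_op_exp:
  assumes "compact K" "K \<subseteq> V"
  shows "uniform_limit K (\<lambda>t. op_exp L (complex_of_real t) g) (op_exp L (complex_of_real t0) g) (at t0)"
proof -
  obtain S M where S: "compact S" "K \<subseteq> S" "S \<subseteq> V" "star_shaped_0 S"
    and M: "\<And>w. w \<in> S \<Longrightarrow> cmod (g w) \<le> M"
    using star_shaped_superset_bounded[OF L V hol assms] by blast
  define \<psi> where "\<psi> t = exp (\<bar>t0\<bar> * c) * (\<bar>t - t0\<bar> * c * exp (\<bar>t - t0\<bar> * c) * M)" for t
  have "(\<psi> \<longlongrightarrow> \<psi> t0) (at t0)" unfolding \<psi>_def by (intro tendsto_intros)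
  then have "(\<psi> \<longlongrightarrow> 0) (at t0)" by (simp add: \<psi>_def)
  moreover have "\<forall>z\<in>S. dist (op_exp L (complex_of_real t) g z) (op_exp L (complex_of_real t0) g z) \<le> \<psi> t" for t
  proof
    fix z assume "z \<in> S"
    have "cmod (op_exp L (complex_of_real t) g z - op_exp L (complex_of_real t0) g z) \<le>
          exp (cmod (complex_of_real t0) * c) * (cmod (complex_of_real t - complex_of_real t0) * c *
            exp (cmod (complex_of_real t - complex_of_real t0) * c) * M)"
      by (rule op_exp_minus_time_norm_le[OF S(4,3)]) (use M \<open>z \<in> S\<close> in auto)
    then show "dist (op_exp L (complex_of_real t) g z) (op_exp L (complex_of_real t0) g z) \<le> \<psi> t"
      by (simp add: \<psi>_def dist_norm flip: of_real_diff)
  qed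
  ultimately have "uniform_limit S (\<lambda>t. op_exp L (complex_of_real t) g) (op_exp L (complex_of_real t0) g) (at t0)"
    by (intro uniform_limit_if_dist_le) auto
  then show ?thesis using S(2) uniform_limit_on_subset by blast
qed

lemma uniform_limit_op_exp_diff_quotient:
  assumes "compact K" "K \<subseteq> V"
  shows "uniform_limit K (\<lambda>t w. (op_exp L (complex_of_real t) g w - g w) / complex_of_real t) (L g) (at 0)"
proof -
  obtain S M where S: "compact S" "K \<subseteq> S" "S \<subseteq> V" "star_shaped_0 S"
    and M: "\<And>w. w \<in> S \<Longrightarrow> cmod (g w) \<le> M"
    using star_shaped_superset_bounded[OF L V hol assms] by blast
  define \<psi> where "\<psi> t = \<bar>t\<bar> * c\<^sup>2 * exp (\<bar>t\<bar> * c) * M" for t :: real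
  have "(\<psi> \<longlongrightarrow> \<psi> 0) (at 0)" unfolding \<psi>_def by (intro tendsto_intros)
  then have "(\<psi> \<longlongrightarrow> 0) (at 0)" by (simp add: \<psi>_def)
  moreover have "eventually (\<lambda>t. \<forall>w\<in>S. dist ((op_exp L (complex_of_real t) g w - g w) / complex_of_real t) (L g w) \<le> \<psi> t) (at 0)"
    using eventually_neq_at_within[of 0 0 UNIV]
  proof eventually_elim
    case (elim t)
    show ?case
    proof
      fix w assume "w \<in> S"
      have "cmod ((op_exp L (complex_of_real t) g w - g w) / complex_of_real t - L g w) \<le>
            cmod (complex_of_real t) * c\<^sup>2 * exp (cmod (complex_of_real t) * c) * M"
        by (rule op_exp_diff_quotient_norm_le[OF L V hol S(4,3)]) (use M \<open>w \<in> S\<close> elim in auto)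
      then show "dist ((op_exp L (complex_of_real t) g w - g w) / complex_of_real t) (L g w) \<le> \<psi> t"
        by (simp add: \<psi>_def dist_norm)
    qed
  qed
  ultimately have "uniform_limit S (\<lambda>t w. (op_exp L (complex_of_real t) g w - g w) / complex_of_real t) (L g) (at 0)"
    by (rule uniform_limit_if_dist_le)
  then show ?thesis using S(2) uniform_limit_on_subset by blast
qed

end

section \<open>The group generated by a Hardy polynomial\<close>

lemma
  assumes "ind_seminorm p"
  shows ind_seminorm_nonneg: "f \<in> real_analytic_fns \<Longrightarrow> 0 \<le> p f"
    and ind_seminorm_add:
      "f \<in> real_analytic_fns \<Longrightarrow> g \<in> real_analytic_fns \<Longrightarrow> p (\<lambda>x. f x + g x) \<le> p f + p g"
    and ind_seminorm_cmult: "f \<in> real_analytic_fns \<Longrightarrow> p (\<lambda>x. c * f x) = cmod c * p f"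
  using assms unfolding ind_seminorm_def by (simp_all add: Ball_def)

lemma ind_seminorm_boundE:
  assumes "ind_seminorm p" "open U" "\<And>x::real. complex_of_real x \<in> U"
  obtains K C where "compact K" "K \<subseteq> U"
    "\<And>g M. g holomorphic_on U \<Longrightarrow> (\<And>z. z \<in> K \<Longrightarrow> cmod (g z) \<le> M) \<Longrightarrow>
       p (\<lambda>x. g (complex_of_real x)) \<le> C * M"
proof -
  have "\<forall>U. open U \<and> (\<forall>x::real. complex_of_real x \<in> U) \<longrightarrow>
        (\<exists>K C. compact K \<and> K \<subseteq> U \<and> (\<forall>g M. g holomorphic_on U \<and> (\<forall>z\<in>K. cmod (g z) \<le> M) \<longrightarrow>
           p (\<lambda>x. g (complex_of_real x)) \<le> C * M))"
    using assms(1) unfolding ind_seminorm_def by (elim conjE)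
  then have "\<exists>K C. compact K \<and> K \<subseteq> U \<and> (\<forall>g M. g holomorphic_on U \<and> (\<forall>z\<in>K. cmod (g z) \<le> M) \<longrightarrow>
           p (\<lambda>x. g (complex_of_real x)) \<le> C * M)"
    using assms(2,3) by simp
  then obtain K C where "compact K \<and> K \<subseteq> U \<and> (\<forall>g M. g holomorphic_on U \<and> (\<forall>z\<in>K. cmod (g z) \<le> M) \<longrightarrow>
           p (\<lambda>x. g (complex_of_real x)) \<le> C * M)"
    by (elim exE)
  then have "compact K" "K \<subseteq> U" "\<And>g M. g holomorphic_on U \<Longrightarrow> (\<And>z. z \<in> K \<Longrightarrow> cmod (g z) \<le> M) \<Longrightarrow>
      p (\<lambda>x. g (complex_of_real x)) \<le> C * M"
    by auto
  then show ?thesis by (rule that)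
qed

lemma tendsto_A_if_uniform_limit:
  assumes U: "open U" "\<And>x::real. complex_of_real x \<in> U"
    and hol: "\<And>t. h t holomorphic_on U" "g holomorphic_on U"
    and unif: "\<And>K. compact K \<Longrightarrow> K \<subseteq> U \<Longrightarrow> uniform_limit K h g F"
  shows "tendsto_A (\<lambda>t x. h t (complex_of_real x)) (\<lambda>x. g (complex_of_real x)) F"
  unfolding tendsto_A_def
proof (intro allI impI)
  fix q assume q: "ind_seminorm q"
  obtain K C where K: "compact K" "K \<subseteq> U"
    and KC: "\<And>f M. f holomorphic_on U \<Longrightarrow> (\<And>z. z \<in> K \<Longrightarrow> cmod (f z) \<le> M) \<Longrightarrow>
               q (\<lambda>x. f (complex_of_real x)) \<le> C * M"
    by (rule ind_seminorm_boundE[OF q U]) blast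
  define D where "D t w = h t w - g w" for t w
  have D_hol: "D t holomorphic_on U" for t unfolding D_def by (intro holomorphic_on_diff hol)
  have D_nonneg: "0 \<le> q (\<lambda>x. D t (complex_of_real x))" for t
    by (rule ind_seminorm_nonneg[OF q real_analytic_fnsI[OF U D_hol]])
  show "((\<lambda>t. q (\<lambda>x. h t (complex_of_real x) - g (complex_of_real x))) \<longlongrightarrow> 0) F"
  proof (rule tendstoI)
    fix e :: real assume "0 < e"
    define \<delta> where "\<delta> = e / (\<bar>C\<bar> + 1)"
    have "0 < \<delta>" using \<open>0 < e\<close> by (simp add: \<delta>_def add_pos_nonneg)
    have "C * \<delta> < e"
    proof -
      have "C * \<delta> \<le> \<bar>C\<bar> * \<delta>" using \<open>0 < \<delta>\<close> by (intro mult_right_mono) auto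
      also have "\<dots> < (\<bar>C\<bar> + 1) * \<delta>" using \<open>0 < \<delta>\<close> by simp
      also have "\<dots> = e" by (simp add: \<delta>_def add_pos_nonneg)
      finally show ?thesis .
    qed
    show "eventually (\<lambda>t. dist (q (\<lambda>x. h t (complex_of_real x) - g (complex_of_real x))) 0 < e) F"
      using uniform_limitD[OF unif[OF K] \<open>0 < \<delta>\<close>]
    proof eventually_elim
      case (elim t)
      have "q (\<lambda>x. D t (complex_of_real x)) \<le> C * \<delta>"
        by (rule KC[OF D_hol]) (use elim in \<open>auto simp: D_def dist_norm less_imp_le\<close>)
      then show ?case using \<open>C * \<delta> < e\<close> D_nonneg[of t] by (simp add: D_def)
    qed
  qed
qed

definition hardy_group :: "nat \<Rightarrow> (nat \<Rightarrow> complex) \<Rightarrow> real \<Rightarrow> (real \<Rightarrow> complex) \<Rightarrow> real \<Rightarrow> complex" where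
  "hardy_group K a t f = (\<lambda>x. \<Sum>n. complex_of_real t ^ n / fact n * (hardy_poly K a ^^ n) f x)"

lemma hardy_group_eq_op_exp:
  assumes "real_star_nbhd V" "g holomorphic_on V"
  shows "hardy_group K a t (\<lambda>x. g (complex_of_real x)) =
         (\<lambda>x. op_exp (hardy_c_poly K a) (complex_of_real t) g (complex_of_real x))"
  by (simp add: hardy_group_def op_exp_def hardy_poly_funpow_eq_hardy_c_poly[OF assms])

lemmas holomorphic_on_op_exp_hardy_c_poly = holomorphic_on_op_exp[OF star_bounded_op_hardy_c_poly]

lemma real_analytic_fns_restrict:
  "real_star_nbhd V \<Longrightarrow> g holomorphic_on V \<Longrightarrow> (\<lambda>x. g (complex_of_real x)) \<in> real_analytic_fns"
  by (rule real_analytic_fnsI[OF real_star_nbhd_open real_star_nbhd_real])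

lemma hardy_poly_real_analytic: "f \<in> real_analytic_fns \<Longrightarrow> hardy_poly K a f \<in> real_analytic_fns"
proof -
  assume "f \<in> real_analytic_fns"
  then obtain V g where V: "real_star_nbhd V" and hol: "g holomorphic_on V"
    and f: "f = (\<lambda>x. g (complex_of_real x))" by (rule real_analytic_fnsE)
  show ?thesis
    unfolding f hardy_poly_eq_hardy_c_poly[OF V hol]
    by (rule real_analytic_fns_restrict[OF V star_bounded_op_holomorphic[OF star_bounded_op_hardy_c_poly V hol]])
qed

lemma hardy_group_real_analytic: "f \<in> real_analytic_fns \<Longrightarrow> hardy_group K a t f \<in> real_analytic_fns"
proof -
  assume "f \<in> real_analytic_fns"
  then obtain V g where V: "real_star_nbhd V" and hol: "g holomorphic_on V"
    and f: "f = (\<lambda>x. g (complex_of_real x))" by (rule real_analytic_fnsE)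
  show ?thesis
    unfolding f hardy_group_eq_op_exp[OF V hol]
    by (rule real_analytic_fns_restrict[OF V holomorphic_on_op_exp_hardy_c_poly[OF V hol]])
qed

lemma hardy_group_add:
  assumes "f1 \<in> real_analytic_fns" "f2 \<in> real_analytic_fns"
  shows "hardy_group K a t (\<lambda>x. f1 x + f2 x) = (\<lambda>x. hardy_group K a t f1 x + hardy_group K a t f2 x)"
proof -
  obtain V1 g1 where V1: "real_star_nbhd V1" "g1 holomorphic_on V1" and f1: "f1 = (\<lambda>x. g1 (complex_of_real x))"
    using assms(1) by (rule real_analytic_fnsE)
  obtain V2 g2 where V2: "real_star_nbhd V2" "g2 holomorphic_on V2" and f2: "f2 = (\<lambda>x. g2 (complex_of_real x))"
    using assms(2) by (rule real_analytic_fnsE)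
  have V: "real_star_nbhd (V1 \<inter> V2)" by (rule real_star_nbhd_Int[OF V1(1) V2(1)])
  have hol: "g1 holomorphic_on V1 \<inter> V2" "g2 holomorphic_on V1 \<inter> V2"
    by (rule holomorphic_on_subset[OF V1(2) Int_lower1], rule holomorphic_on_subset[OF V2(2) Int_lower2])
  have "(\<lambda>w. g1 w + g2 w) holomorphic_on V1 \<inter> V2" by (intro holomorphic_on_add hol)
  then have "hardy_group K a t (\<lambda>x. f1 x + f2 x) =
             (\<lambda>x. op_exp (hardy_c_poly K a) (complex_of_real t) (\<lambda>w. g1 w + g2 w) (complex_of_real x))"
    unfolding f1 f2 by (rule hardy_group_eq_op_exp[OF V])
  also have "\<dots> = (\<lambda>x. op_exp (hardy_c_poly K a) (complex_of_real t) g1 (complex_of_real x) +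
                      op_exp (hardy_c_poly K a) (complex_of_real t) g2 (complex_of_real x))"
    using op_exp_add[OF star_bounded_op_hardy_c_poly V hol real_star_nbhd_real[OF V]] by simp
  also have "\<dots> = (\<lambda>x. hardy_group K a t f1 x + hardy_group K a t f2 x)"
    unfolding f1 f2 hardy_group_eq_op_exp[OF V hol(1)] hardy_group_eq_op_exp[OF V hol(2)] ..
  finally show ?thesis .
qed

lemma hardy_group_cmult:
  assumes "f \<in> real_analytic_fns"
  shows "hardy_group K a t (\<lambda>x. b * f x) = (\<lambda>x. b * hardy_group K a t f x)"
proof -
  obtain V g where V: "real_star_nbhd V" and hol: "g holomorphic_on V"
    and f: "f = (\<lambda>x. g (complex_of_real x))" using assms by (rule real_analytic_fnsE)
  have "(\<lambda>w. b * g w) holomorphic_on V" by (intro holomorphic_on_mult holomorphic_on_const hol)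
  then have "hardy_group K a t (\<lambda>x. b * f x) =
             (\<lambda>x. op_exp (hardy_c_poly K a) (complex_of_real t) (\<lambda>w. b * g w) (complex_of_real x))"
    unfolding f by (rule hardy_group_eq_op_exp[OF V])
  also have "\<dots> = (\<lambda>x. b * hardy_group K a t f x)"
    unfolding f hardy_group_eq_op_exp[OF V hol]
    using op_exp_cmult[OF star_bounded_op_hardy_c_poly V hol real_star_nbhd_real[OF V]] by simp
  finally show ?thesis .
qed

lemma ind_seminorm_hardy_group_bound:
  assumes q: "ind_seminorm q" and U: "open U" "\<And>x::real. complex_of_real x \<in> U"
  shows "\<exists>S C. compact S \<and> S \<subseteq> U \<and> (\<forall>g M. g holomorphic_on U \<and> (\<forall>z\<in>S. cmod (g z) \<le> M) \<longrightarrow>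
           q (hardy_group K a t (\<lambda>x. g (complex_of_real x))) \<le> C * M)"
proof -
  obtain V where V: "real_star_nbhd V" "V \<subseteq> U" using real_star_nbhd_subset U by metis
  obtain Q C where Q: "compact Q" "Q \<subseteq> V"
    and QC: "\<And>f M. f holomorphic_on V \<Longrightarrow> (\<And>z. z \<in> Q \<Longrightarrow> cmod (f z) \<le> M) \<Longrightarrow>
               q (\<lambda>x. f (complex_of_real x)) \<le> C * M"
    by (rule ind_seminorm_boundE[OF q real_star_nbhd_open[OF V(1)] real_star_nbhd_real[OF V(1)]]) blast
  obtain S where S: "compact S" "Q \<subseteq> S" "S \<subseteq> V" "star_shaped_0 S"
    using compact_star_shaped_0_superset[OF Q real_star_nbhd_star_shaped[OF V(1)]] by blast
  define E where "E = exp (\<bar>t\<bar> * (\<Sum>k\<le>K. cmod (a k)))"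
  show ?thesis
  proof (intro exI conjI allI impI)
    show "compact S" "S \<subseteq> U" using S V(2) by auto
    fix g M assume gM: "g holomorphic_on U \<and> (\<forall>z\<in>S. cmod (g z) \<le> M)"
    then have hol: "g holomorphic_on V" using V(2) holomorphic_on_subset by blast
    have "cmod (op_exp (hardy_c_poly K a) (complex_of_real t) g z) \<le> E * M" if "z \<in> Q" for z
    proof -
      have "cmod (op_exp (hardy_c_poly K a) (complex_of_real t) g z) \<le>
            exp (cmod (complex_of_real t) * (\<Sum>k\<le>K. cmod (a k))) * M"
        by (rule op_exp_norm_le[OF star_bounded_op_hardy_c_poly V(1) hol S(4,3)]) (use gM S(2) that in auto)
      then show ?thesis by (simp add: E_def)
    qed
    then have "q (\<lambda>x. op_exp (hardy_c_poly K a) (complex_of_real t) g (complex_of_real x)) \<le> C * (E * M)"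
      by (rule QC[OF holomorphic_on_op_exp_hardy_c_poly[OF V(1) hol]])
    then show "q (hardy_group K a t (\<lambda>x. g (complex_of_real x))) \<le> C * E * M"
      by (simp add: hardy_group_eq_op_exp[OF V(1) hol] mult.assoc)
  qed
qed

lemma ind_seminorm_hardy_group:
  assumes q: "ind_seminorm q"
  shows "ind_seminorm (\<lambda>f. q (hardy_group K a t f))"
  unfolding ind_seminorm_def
proof (intro conjI ballI allI impI)
  fix f assume "f \<in> real_analytic_fns"
  then show "0 \<le> q (hardy_group K a t f)" by (intro ind_seminorm_nonneg[OF q] hardy_group_real_analytic)
next
  fix f g assume f: "f \<in> real_analytic_fns" and g: "g \<in> real_analytic_fns"
  show "q (hardy_group K a t (\<lambda>x. f x + g x)) \<le> q (hardy_group K a t f) + q (hardy_group K a t g)"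
    unfolding hardy_group_add[OF f g]
    by (intro ind_seminorm_add[OF q] hardy_group_real_analytic f g)
next
  fix b f assume f: "f \<in> real_analytic_fns"
  show "q (hardy_group K a t (\<lambda>x. b * f x)) = cmod b * q (hardy_group K a t f)"
    unfolding hardy_group_cmult[OF f] by (intro ind_seminorm_cmult[OF q] hardy_group_real_analytic f)
next
  fix U :: "complex set" assume "open U \<and> (\<forall>x::real. complex_of_real x \<in> U)"
  then show "\<exists>S C. compact S \<and> S \<subseteq> U \<and> (\<forall>g M. g holomorphic_on U \<and> (\<forall>z\<in>S. cmod (g z) \<le> M) \<longrightarrow>
               q (hardy_group K a t (\<lambda>x. g (complex_of_real x))) \<le> C * M)"
    by (intro ind_seminorm_hardy_group_bound[OF q]) auto
qed

lemma cont_lin_op_hardy_group: "cont_lin_op (hardy_group K a t)"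
  unfolding cont_lin_op_def
proof (intro conjI ballI allI impI)
  fix q :: "(real \<Rightarrow> complex) \<Rightarrow> real" assume "ind_seminorm q"
  then have "ind_seminorm (\<lambda>f. q (hardy_group K a t f))" by (rule ind_seminorm_hardy_group)
  then show "\<exists>p C. ind_seminorm p \<and> (\<forall>f\<in>real_analytic_fns. q (hardy_group K a t f) \<le> C * p f)"
    by (intro exI[of _ "\<lambda>f. q (hardy_group K a t f)"] exI[of _ "1::real"] conjI) auto
qed (simp_all add: hardy_group_real_analytic hardy_group_add hardy_group_cmult)

lemma hardy_group_add_time:
  assumes "f \<in> real_analytic_fns"
  shows "hardy_group K a t (hardy_group K a s f) = hardy_group K a (t + s) f"
proof -
  obtain V g where V: "real_star_nbhd V" and hol: "g holomorphic_on V"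
    and f: "f = (\<lambda>x. g (complex_of_real x))" using assms by (rule real_analytic_fnsE)
  show ?thesis
    unfolding f hardy_group_eq_op_exp[OF V hol]
      hardy_group_eq_op_exp[OF V holomorphic_on_op_exp_hardy_c_poly[OF V hol]]
    using op_exp_add_time[OF star_bounded_op_hardy_c_poly V hol real_star_nbhd_real[OF V]]
    by simp
qed

lemma hardy_group_0: "hardy_group K a 0 f = f"
proof -
  have "(\<Sum>n. complex_of_real 0 ^ n / fact n * (hardy_poly K a ^^ n) f x) = f x" for x
  proof -
    have "(\<lambda>n. complex_of_real 0 ^ n / fact n * (hardy_poly K a ^^ n) f x) =
          (\<lambda>n. (hardy_poly K a ^^ n) f x / fact n * 0 ^ n)"
      by (simp add: fun_eq_iff)
    then show ?thesis by (simp only: powser_zero) simp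
  qed
  then show ?thesis unfolding hardy_group_def by (intro ext)
qed

lemma tendsto_A_hardy_group:
  assumes "f \<in> real_analytic_fns"
  shows "tendsto_A (\<lambda>t. hardy_group K a t f) (hardy_group K a t0 f) (at t0)"
proof -
  obtain V g where V: "real_star_nbhd V" and hol: "g holomorphic_on V"
    and f: "f = (\<lambda>x. g (complex_of_real x))" using assms by (rule real_analytic_fnsE)
  have "tendsto_A (\<lambda>t x. op_exp (hardy_c_poly K a) (complex_of_real t) g (complex_of_real x))
          (\<lambda>x. op_exp (hardy_c_poly K a) (complex_of_real t0) g (complex_of_real x)) (at t0)"
    by (rule tendsto_A_if_uniform_limit[where h = "\<lambda>t. op_exp (hardy_c_poly K a) (complex_of_real t) g",
          OF real_star_nbhd_open[OF V] real_star_nbhd_real[OF V]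
          holomorphic_on_op_exp_hardy_c_poly[OF V hol] holomorphic_on_op_exp_hardy_c_poly[OF V hol]
          uniform_limit_op_exp[OF star_bounded_op_hardy_c_poly V hol]])
  then show ?thesis unfolding f hardy_group_eq_op_exp[OF V hol] .
qed

lemma tendsto_A_hardy_group_generator:
  assumes "f \<in> real_analytic_fns"
  shows "tendsto_A (\<lambda>t x. (hardy_group K a t f x - f x) / complex_of_real t) (hardy_poly K a f) (at 0)"
proof -
  obtain V g where V: "real_star_nbhd V" and hol: "g holomorphic_on V"
    and f: "f = (\<lambda>x. g (complex_of_real x))" using assms by (rule real_analytic_fnsE)
  define H where "H t w = (op_exp (hardy_c_poly K a) (complex_of_real t) g w - g w) / complex_of_real t" for t w
  have "H t holomorphic_on V" for t
    unfolding H_def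
    by (intro holomorphic_on_divide_gen holomorphic_on_diff holomorphic_on_const
        holomorphic_on_op_exp_hardy_c_poly[OF V hol] hol) auto
  then have "tendsto_A (\<lambda>t x. H t (complex_of_real x)) (\<lambda>x. hardy_c_poly K a g (complex_of_real x)) (at 0)"
    using uniform_limit_op_exp_diff_quotient[OF star_bounded_op_hardy_c_poly V hol]
    by (intro tendsto_A_if_uniform_limit[OF real_star_nbhd_open[OF V] real_star_nbhd_real[OF V]]
        star_bounded_op_holomorphic[OF star_bounded_op_hardy_c_poly V hol]) (simp_all add: H_def[abs_def])
  then show ?thesis
    unfolding f hardy_group_eq_op_exp[OF V hol] hardy_poly_eq_hardy_c_poly[OF V hol] H_def .
qed

theorem mainTheorem8:
  fixes K :: nat and a :: "nat \<Rightarrow> complex"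
  shows "\<exists>T. C0_group T \<and> generates (hardy_poly K a) T"
proof (intro exI conjI)
  show "C0_group (hardy_group K a)"
    unfolding C0_group_def
    by (intro conjI allI ballI cont_lin_op_hardy_group hardy_group_add_time hardy_group_0 tendsto_A_hardy_group)
  show "generates (hardy_poly K a) (hardy_group K a)"
    unfolding generates_def by (intro ballI conjI hardy_poly_real_analytic tendsto_A_hardy_group_generator)
qed

end
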